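(* Let $\mathcal{F}$ be a holomorphic foliation by curves defined near a point $p$ of $\mathbb{C}^n$ by the polynomial vector field $X_p=\sum_{j=1}^{n}P_j(z)\frac{\partial}{\partial z_j}$, where, in these coordinates, $W=\{z_1=\cdots=z_d=0\}$ and $m_i=m_W(P_i)$. Then, by a linear change of coordinates $w=Az$ preserving $W$, $\mathcal{F}$ may be described by a polynomial vector field $Y_p=\sum_{j=1}^{n}Q_j(w)\frac{\partial}{\partial w_j}$ with $$m_W(Q_j)=\begin{cases} m'_W(\mathcal F), & j=1,\ldots,d,\\ m_W(\mathcal F), & j=d+1,\ldots,n,\end{cases}$$ where $m'_W(\mathcal{F})=\min\{m_1,\ldots,m_d\}$.
   Context: For a function $P$ written as $P(z)=\sum_{|a|=q}z_1^{a_1}\cdots z_d^{a_d}P_a(z)$, $a=(a_1,\ldots,a_d)\in\mathbb Z_{\ge0}^d$, with at least one $P_a$ not vanishing identically on $\{z_1=\cdots=z_d=0\}$, the multiplicity of $P$ along $W$ is $m_W(P)=q$. The multiplicity of $\mathcal F$ along $W$ is $m_W(\mathcal F)=\min\{m_1,\ldots,m_n\}$. *)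

theory Defs
  imports Complex_Main "HOL-Library.Extended_Nat"
begin

text \<open>Points of C^n are modelled as functions nat => complex, only coordinates
  0..n-1 being relevant (coordinate z_{i+1} of the paper is z i here).\<close>

definition monom_fun :: "nat \<Rightarrow> (nat \<Rightarrow> nat) \<Rightarrow> (nat \<Rightarrow> complex) \<Rightarrow> complex" where
  "monom_fun n \<alpha> z = (\<Prod>i<n. z i ^ \<alpha> i)"

definition poly_fun :: "nat \<Rightarrow> ((nat \<Rightarrow> complex) \<Rightarrow> complex) \<Rightarrow> bool" where
  "poly_fun n f \<longleftrightarrow> (\<exists>c :: (nat \<Rightarrow> nat) \<Rightarrow> complex.
      finite {\<alpha>. c \<alpha> \<noteq> 0} \<and> (\<forall>\<alpha>. c \<alpha> \<noteq> 0 \<longrightarrow> (\<forall>i\<ge>n. \<alpha> i = 0)) \<and>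
      (\<forall>z. f z = (\<Sum>\<alpha>\<in>{\<alpha>. c \<alpha> \<noteq> 0}. c \<alpha> * monom_fun n \<alpha> z)))"

definition multi_idx :: "nat \<Rightarrow> nat \<Rightarrow> (nat \<Rightarrow> nat) set" where
  "multi_idx d q = {a. (\<forall>i\<ge>d. a i = 0) \<and> (\<Sum>i<d. a i) = q}"

definition mult_rep :: "nat \<Rightarrow> nat \<Rightarrow> ((nat \<Rightarrow> complex) \<Rightarrow> complex) \<Rightarrow> nat \<Rightarrow> bool" where
  "mult_rep n d P q \<longleftrightarrow> (\<exists>Pa :: (nat \<Rightarrow> nat) \<Rightarrow> (nat \<Rightarrow> complex) \<Rightarrow> complex.
      (\<forall>a\<in>multi_idx d q. poly_fun n (Pa a)) \<and>
      (\<forall>z. P z = (\<Sum>a\<in>multi_idx d q. (\<Prod>i<d. z i ^ a i) * Pa a z)) \<and>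
      (\<exists>a\<in>multi_idx d q. \<exists>z. (\<forall>i<d. z i = 0) \<and> Pa a z \<noteq> 0))"

text \<open>Multiplicity m_W(P) along W; \<infinity> if no such representation exists (P = 0).\<close>
definition multW :: "nat \<Rightarrow> nat \<Rightarrow> ((nat \<Rightarrow> complex) \<Rightarrow> complex) \<Rightarrow> enat" where
  "multW n d P = (if \<exists>q. mult_rep n d P q then enat (LEAST q. mult_rep n d P q) else \<infinity>)"

definition matvec :: "nat \<Rightarrow> (nat \<Rightarrow> nat \<Rightarrow> complex) \<Rightarrow> (nat \<Rightarrow> complex) \<Rightarrow> (nat \<Rightarrow> complex)" where
  "matvec n A z = (\<lambda>i. if i < n then (\<Sum>k<n. A i k * z k) else 0)"

definition inverse_mats :: "nat \<Rightarrow> (nat \<Rightarrow> nat \<Rightarrow> complex) \<Rightarrow> (nat \<Rightarrow> nat \<Rightarrow> complex) \<Rightarrow> bool" where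
  "inverse_mats n A B \<longleftrightarrow> (\<forall>i<n. \<forall>j<n.
      (\<Sum>k<n. A i k * B k j) = (if i = j then 1 else 0) \<and>
      (\<Sum>k<n. B i k * A k j) = (if i = j then 1 else 0))"

definition Wset :: "nat \<Rightarrow> nat \<Rightarrow> (nat \<Rightarrow> complex) set" where
  "Wset n d = {z. (\<forall>i<d. z i = 0) \<and> (\<forall>i\<ge>n. z i = 0)}"

end

theory Submission
  imports Defs
begin

(* The multiplicity m_W(P) is the largest q such that P lies in the q-th power I_W^q of the
   ideal of W, i.e. such that every monomial of P has degree at least q in z_1, ..., z_d.
   For each j pick an index kappa(j) at which m_W(P_i) is minimal, over i <= d when j <= d
   and over all i when j > d, and replace P_j by P_j + t P_kappa(j). The monomial of
   P_kappa(j) of lowest W-degree can be cancelled by at most one value of t, so for generic t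
   the new component has multiplicity exactly m_W(P_kappa(j)). These new components form the
   vector field A P(B w) for the matrix A with rows e_j + t e_kappa(j) and B its inverse:
   kappa can be chosen idempotent, so A is invertible for t <> -1, and kappa maps
   {1, ..., d} into itself, so A and B preserve W and, being linear, every power of I_W. *)

section \<open>Powers of the ideal of \<open>W\<close>\<close>

definition W_degree :: "nat \<Rightarrow> (nat \<Rightarrow> nat) \<Rightarrow> nat" where
  "W_degree d \<alpha> = (\<Sum>i<d. \<alpha> i)"

definition in_W_power :: "nat \<Rightarrow> nat \<Rightarrow> nat \<Rightarrow> ((nat \<Rightarrow> complex) \<Rightarrow> complex) \<Rightarrow> bool" where
  "in_W_power n d q f \<longleftrightarrow> (\<exists>c :: (nat \<Rightarrow> nat) \<Rightarrow> complex.
      finite {\<alpha>. c \<alpha> \<noteq> 0} \<and> (\<forall>\<alpha>. c \<alpha> \<noteq> 0 \<longrightarrow> (\<forall>i\<ge>n. \<alpha> i = 0) \<and> q \<le> W_degree d \<alpha>) \<and>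
      (\<forall>z. f z = (\<Sum>\<alpha>\<in>{\<alpha>. c \<alpha> \<noteq> 0}. c \<alpha> * monom_fun n \<alpha> z)))"

lemma W_degree_add: "W_degree d (\<lambda>i. a i + b i) = W_degree d a + W_degree d b"
  unfolding W_degree_def by (simp add: sum.distrib)

lemma W_degree_eq_0_iff: "W_degree d \<alpha> = 0 \<longleftrightarrow> (\<forall>i<d. \<alpha> i = 0)"
  by (auto simp: W_degree_def)

lemma W_degree_eq_weighted_sum:
  assumes "d \<le> n"
  shows "(\<Sum>i<n. (if i < d then 1 else 0) * \<alpha> i) = W_degree d \<alpha>"
proof -
  have "(\<Sum>i<n. (if i < d then 1 else 0) * \<alpha> i) = (\<Sum>i<n. if i < d then \<alpha> i else 0)"
    by (intro sum.cong) auto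
  also have "\<dots> = (\<Sum>i\<in>{i\<in>{..<n}. i < d}. \<alpha> i)"
    by (rule sum.inter_filter[symmetric]) simp
  also have "{i\<in>{..<n}. i < d} = {..<d}" using assms by auto
  finally show ?thesis by (simp add: W_degree_def)
qed

lemma monom_fun_Suc: "monom_fun (Suc n) \<alpha> z = monom_fun n \<alpha> z * z n ^ \<alpha> n"
  by (simp add: monom_fun_def)

lemma monom_fun_cong:
  "(\<And>i. i < n \<Longrightarrow> z i = z' i) \<Longrightarrow> (\<And>i. i < n \<Longrightarrow> \<alpha> i = \<beta> i)
    \<Longrightarrow> monom_fun n \<alpha> z = monom_fun n \<beta> z'"
  unfolding monom_fun_def by (rule prod.cong) auto

lemma monom_fun_add: "monom_fun n (\<lambda>i. a i + b i) z = monom_fun n a z * monom_fun n b z"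
  unfolding monom_fun_def by (simp add: power_add prod.distrib)

lemma monom_fun_multi_idx:
  "a \<in> multi_idx d q \<Longrightarrow> d \<le> n \<Longrightarrow> monom_fun n a z = (\<Prod>i<d. z i ^ a i)"
  unfolding monom_fun_def multi_idx_def by (intro prod.mono_neutral_right) auto

lemma monom_fun_restrict_W:
  assumes "d \<le> n"
  shows "monom_fun n \<beta> (\<lambda>i. if i < d then 0 else z i)
           = (if \<forall>i<d. \<beta> i = 0 then monom_fun n \<beta> z else 0)"
proof (cases "\<forall>i<d. \<beta> i = 0")
  case True
  then show ?thesis unfolding monom_fun_def by (auto intro: prod.cong)
next
  case False
  then obtain i where "i < d" "\<beta> i \<noteq> 0" by auto
  with assms show ?thesis unfolding monom_fun_def by (auto intro!: prod_zero bexI[of _ i])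
qed

lemma monom_fun_nonzero_on_W:
  assumes "d \<le> n" "\<forall>i<d. z i = 0" "monom_fun n \<beta> z \<noteq> 0"
  shows "\<forall>i<d. \<beta> i = 0"
proof (rule ccontr)
  assume "\<not> (\<forall>i<d. \<beta> i = 0)"
  then obtain i where "i < d" "\<beta> i \<noteq> 0" by auto
  with assms show False unfolding monom_fun_def by (auto intro!: prod_zero bexI[of _ i])
qed

lemma poly_fun_cong:
  assumes "poly_fun n f" "\<forall>i<n. z i = z' i"
  shows "f z = f z'"
proof -
  obtain c where "\<forall>z. f z = (\<Sum>\<alpha>\<in>{\<alpha>. c \<alpha> \<noteq> 0}. c \<alpha> * monom_fun n \<alpha> z)"
    using assms(1) unfolding poly_fun_def by blast
  moreover have "monom_fun n \<alpha> z = monom_fun n \<alpha> z'" for \<alpha>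
    using assms(2) by (intro monom_fun_cong) auto
  ultimately show ?thesis by simp
qed

lemma sum_monom_fun_eq_0_last_var_coeff:
  fixes h :: "'x \<Rightarrow> complex"
  assumes fin: "finite X" and vanish: "\<forall>z. (\<Sum>x\<in>X. h x * monom_fun (Suc n) (g x) z) = 0"
  shows "(\<Sum>x\<in>{x\<in>X. g x n = k}. h x * monom_fun n (g x) z) = 0"
proof -
  define M where "M = Max ((\<lambda>x. g x n) ` X)"
  have le_M: "g x n \<le> M" if "x \<in> X" for x
    unfolding M_def using fin that by (intro Max_ge) auto
  define E where "E k z = (\<Sum>x\<in>{x\<in>X. g x n = k}. h x * monom_fun n (g x) z)" for k z
  have E_upd: "E k (z(n := y)) = E k z" for k z y
    unfolding E_def by (intro sum.cong refl arg_cong2[where f = "(*)"] monom_fun_cong) auto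
  have decomp: "(\<Sum>x\<in>X. h x * monom_fun (Suc n) (g x) z) = (\<Sum>k\<le>M. E k z * z n ^ k)" for z
  proof -
    have "(\<Sum>x\<in>X. h x * monom_fun (Suc n) (g x) z)
        = (\<Sum>k\<le>M. \<Sum>x\<in>{x\<in>X. g x n = k}. h x * monom_fun (Suc n) (g x) z)"
      by (rule sum.group[symmetric]) (use fin le_M in auto)
    then show ?thesis
      unfolding E_def sum_distrib_right by (simp add: monom_fun_Suc mult.assoc)
  qed
  \<comment> \<open>For fixed \<open>z\<close> this is a polynomial in \<open>y\<close>, the value of the last variable.\<close>
  have "(\<Sum>k\<le>M. E k z * y ^ k) = 0" for y
  proof -
    have "(\<Sum>k\<le>M. E k z * y ^ k) = (\<Sum>k\<le>M. E k (z(n := y)) * (z(n := y)) n ^ k)"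
      by (simp add: E_upd)
    also have "\<dots> = 0" using decomp vanish by metis
    finally show ?thesis .
  qed
  then show ?thesis
  proof (cases "k \<le> M")
    case True
    with polyfun_eq_0[of "\<lambda>k. E k z" M] \<open>\<And>y. (\<Sum>k\<le>M. E k z * y ^ k) = 0\<close>
    show ?thesis unfolding E_def by blast
  next
    case False
    then have "{x\<in>X. g x n = k} = {}" using le_M by (auto dest: le_trans)
    then show ?thesis by (simp only: sum.empty)
  qed
qed

lemma sum_monom_fun_eq_0_coeff:
  fixes h :: "'x \<Rightarrow> complex"
  assumes "finite X" "\<forall>x\<in>X. \<forall>i\<ge>n. g x i = 0"
    and "\<forall>z. (\<Sum>x\<in>X. h x * monom_fun n (g x) z) = 0"
  shows "(\<Sum>x\<in>{x\<in>X. g x = \<alpha>}. h x) = 0"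
  using assms
proof (induction n arbitrary: X g h \<alpha>)
  case 0
  then have "{x\<in>X. g x = \<alpha>} = (if \<alpha> = (\<lambda>_. 0) then X else {})" by auto
  moreover have "(\<Sum>x\<in>X. h x) = 0" using 0(3) by (simp add: monom_fun_def)
  ultimately show ?case by simp
next
  case (Suc n)
  define X' where "X' = {x\<in>X. g x n = \<alpha> n}"
  have "(\<Sum>x\<in>{x\<in>X'. (g x)(n := 0) = \<alpha>(n := 0)}. h x) = 0"
  proof (rule Suc.IH)
    show "finite X'" using Suc.prems(1) by (simp add: X'_def)
    show "\<forall>x\<in>X'. \<forall>i\<ge>n. ((g x)(n := 0)) i = 0" using Suc.prems(2) by (auto simp: X'_def)
    have "(\<Sum>x\<in>X'. h x * monom_fun n ((g x)(n := 0)) z)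
        = (\<Sum>x\<in>{x\<in>X. g x n = \<alpha> n}. h x * monom_fun n (g x) z)" for z
      unfolding X'_def by (intro sum.cong refl arg_cong2[where f = "(*)"] monom_fun_cong) auto
    then show "\<forall>z. (\<Sum>x\<in>X'. h x * monom_fun n ((g x)(n := 0)) z) = 0"
      using sum_monom_fun_eq_0_last_var_coeff[OF Suc.prems(1,3)] by simp
  qed
  moreover have "(g x n = \<alpha> n \<and> (g x)(n := 0) = \<alpha>(n := 0)) \<longleftrightarrow> g x = \<alpha>" for x
    by (metis fun_upd_triv fun_upd_upd)
  then have "{x\<in>X'. (g x)(n := 0) = \<alpha>(n := 0)} = {x\<in>X. g x = \<alpha>}"
    unfolding X'_def by blast
  ultimately show ?case by simp
qed

lemma sum_monom_fun_regroup:
  fixes h :: "'x \<Rightarrow> complex" and g :: "'x \<Rightarrow> nat \<Rightarrow> nat"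
  assumes "finite X"
  defines "c \<equiv> \<lambda>\<alpha>. \<Sum>x\<in>{x\<in>X. g x = \<alpha>}. h x"
  shows "{\<alpha>. c \<alpha> \<noteq> 0} \<subseteq> g ` X"
    and "(\<Sum>x\<in>X. h x * monom_fun n (g x) z) = (\<Sum>\<alpha>\<in>{\<alpha>. c \<alpha> \<noteq> 0}. c \<alpha> * monom_fun n \<alpha> z)"
proof -
  show supp: "{\<alpha>. c \<alpha> \<noteq> 0} \<subseteq> g ` X"
  proof
    fix \<alpha> assume "\<alpha> \<in> {\<alpha>. c \<alpha> \<noteq> 0}"
    show "\<alpha> \<in> g ` X"
    proof (rule ccontr)
      assume "\<alpha> \<notin> g ` X"
      then have "{x\<in>X. g x = \<alpha>} = {}" by blast
      then have "c \<alpha> = 0" by (simp only: c_def sum.empty)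
      with \<open>\<alpha> \<in> {\<alpha>. c \<alpha> \<noteq> 0}\<close> show False by simp
    qed
  qed
  have "(\<Sum>x\<in>X. h x * monom_fun n (g x) z)
      = (\<Sum>\<alpha>\<in>g ` X. \<Sum>x\<in>{x\<in>X. g x = \<alpha>}. h x * monom_fun n (g x) z)"
    by (rule sum.group[symmetric]) (use assms(1) in auto)
  also have "\<dots> = (\<Sum>\<alpha>\<in>g ` X. c \<alpha> * monom_fun n \<alpha> z)"
    unfolding c_def sum_distrib_right by (intro sum.cong refl) auto
  also have "\<dots> = (\<Sum>\<alpha>\<in>{\<alpha>. c \<alpha> \<noteq> 0}. c \<alpha> * monom_fun n \<alpha> z)"
    by (rule sum.mono_neutral_right) (use assms(1) supp in auto)
  finally show "(\<Sum>x\<in>X. h x * monom_fun n (g x) z) = (\<Sum>\<alpha>\<in>{\<alpha>. c \<alpha> \<noteq> 0}. c \<alpha> * monom_fun n \<alpha> z)" .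
qed

lemma in_W_power_iff_coeffs:
  fixes h :: "'x \<Rightarrow> complex"
  assumes fin: "finite X" and supp: "\<forall>x\<in>X. \<forall>i\<ge>n. g x i = 0"
    and rep: "\<forall>z. f z = (\<Sum>x\<in>X. h x * monom_fun n (g x) z)"
  shows "in_W_power n d q f \<longleftrightarrow> (\<forall>\<alpha>. W_degree d \<alpha> < q \<longrightarrow> (\<Sum>x\<in>{x\<in>X. g x = \<alpha>}. h x) = 0)"
proof (intro iffI allI impI)
  fix \<alpha> assume "in_W_power n d q f" and low: "W_degree d \<alpha> < q"
  then obtain c where c: "finite {\<alpha>. c \<alpha> \<noteq> 0}"
      "\<forall>\<alpha>. c \<alpha> \<noteq> 0 \<longrightarrow> (\<forall>i\<ge>n. \<alpha> i = 0) \<and> q \<le> W_degree d \<alpha>"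
      "\<forall>z. f z = (\<Sum>\<alpha>\<in>{\<alpha>. c \<alpha> \<noteq> 0}. c \<alpha> * monom_fun n \<alpha> z)"
    unfolding in_W_power_def by blast
  define S where "S = {\<alpha>. c \<alpha> \<noteq> 0}"
  have fin_S: "finite S" using c(1) by (simp add: S_def)
  \<comment> \<open>Compare the given representation with the one witnessing \<open>in_W_power\<close>.\<close>
  have "(\<Sum>y\<in>{y\<in>X <+> S. case_sum g id y = \<alpha>}. case_sum h (\<lambda>\<beta>. - c \<beta>) y) = 0"
  proof (rule sum_monom_fun_eq_0_coeff)
    show "finite (X <+> S)" using fin fin_S by simp
    show "\<forall>y\<in>X <+> S. \<forall>i\<ge>n. case_sum g id y i = 0" using supp c(2) by (auto simp: S_def)
    show "\<forall>z. (\<Sum>y\<in>X <+> S. case_sum h (\<lambda>\<beta>. - c \<beta>) y * monom_fun n (case_sum g id y) z) = 0"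
    proof
      fix z
      have "(\<Sum>y\<in>X <+> S. case_sum h (\<lambda>\<beta>. - c \<beta>) y * monom_fun n (case_sum g id y) z)
          = (\<Sum>x\<in>X. h x * monom_fun n (g x) z) - (\<Sum>\<beta>\<in>S. c \<beta> * monom_fun n \<beta> z)"
        by (simp add: sum.Plus[OF fin fin_S] sum_negf)
      also have "\<dots> = 0" using rep c(3) by (simp add: S_def)
      finally show "(\<Sum>y\<in>X <+> S. case_sum h (\<lambda>\<beta>. - c \<beta>) y * monom_fun n (case_sum g id y) z) = 0" .
    qed
  qed
  moreover have "{y\<in>X <+> S. case_sum g id y = \<alpha>} = {x\<in>X. g x = \<alpha>} <+> {}"
    using c(2) low by (auto simp: S_def)
  ultimately show "(\<Sum>x\<in>{x\<in>X. g x = \<alpha>}. h x) = 0"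
    using fin by (simp add: sum.Plus o_def)
next
  assume low: "\<forall>\<alpha>. W_degree d \<alpha> < q \<longrightarrow> (\<Sum>x\<in>{x\<in>X. g x = \<alpha>}. h x) = 0"
  define c where "c \<alpha> = (\<Sum>x\<in>{x\<in>X. g x = \<alpha>}. h x)" for \<alpha>
  have supp_c: "{\<alpha>. c \<alpha> \<noteq> 0} \<subseteq> g ` X"
    and rep_c: "\<And>z. (\<Sum>x\<in>X. h x * monom_fun n (g x) z) = (\<Sum>\<alpha>\<in>{\<alpha>. c \<alpha> \<noteq> 0}. c \<alpha> * monom_fun n \<alpha> z)"
    using sum_monom_fun_regroup[OF fin, where g = g and h = h] unfolding c_def by blast+
  have "finite {\<alpha>. c \<alpha> \<noteq> 0}" using fin supp_c finite_surj by blast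
  moreover have "\<forall>\<alpha>. c \<alpha> \<noteq> 0 \<longrightarrow> (\<forall>i\<ge>n. \<alpha> i = 0) \<and> q \<le> W_degree d \<alpha>"
  proof (intro allI impI)
    fix \<alpha> assume "c \<alpha> \<noteq> 0"
    then have "q \<le> W_degree d \<alpha>" using low unfolding c_def by (meson not_less)
    moreover obtain x where "x \<in> X" "\<alpha> = g x" using supp_c \<open>c \<alpha> \<noteq> 0\<close> by blast
    ultimately show "(\<forall>i\<ge>n. \<alpha> i = 0) \<and> q \<le> W_degree d \<alpha>" using supp by simp
  qed
  ultimately show "in_W_power n d q f" unfolding in_W_power_def using rep rep_c by auto
qed

corollary in_W_power_sumI:
  fixes h :: "'x \<Rightarrow> complex"
  assumes "finite X" "\<forall>x\<in>X. (\<forall>i\<ge>n. g x i = 0) \<and> q \<le> W_degree d (g x)"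
    and "\<forall>z. f z = (\<Sum>x\<in>X. h x * monom_fun n (g x) z)"
  shows "in_W_power n d q f"
proof -
  have "(\<Sum>x\<in>{x\<in>X. g x = \<alpha>}. h x) = 0" if "W_degree d \<alpha> < q" for \<alpha>
  proof -
    have "{x\<in>X. g x = \<alpha>} = {}" using assms(2) that by auto
    then show ?thesis by (simp only: sum.empty)
  qed
  moreover have "in_W_power n d q f
      \<longleftrightarrow> (\<forall>\<alpha>. W_degree d \<alpha> < q \<longrightarrow> (\<Sum>x\<in>{x\<in>X. g x = \<alpha>}. h x) = 0)"
    by (rule in_W_power_iff_coeffs) (use assms in auto)
  ultimately show ?thesis by simp
qed

corollary in_W_power_iff_poly_coeffs:
  assumes "finite {\<alpha>. c \<alpha> \<noteq> 0}" "\<forall>\<alpha>. c \<alpha> \<noteq> 0 \<longrightarrow> (\<forall>i\<ge>n. \<alpha> i = 0)"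
    and "\<forall>z. f z = (\<Sum>\<alpha>\<in>{\<alpha>. c \<alpha> \<noteq> 0}. c \<alpha> * monom_fun n \<alpha> z)"
  shows "in_W_power n d q f \<longleftrightarrow> (\<forall>\<alpha>. c \<alpha> \<noteq> 0 \<longrightarrow> q \<le> W_degree d \<alpha>)"
proof -
  have "{x\<in>{\<alpha>. c \<alpha> \<noteq> 0}. id x = \<alpha>} = (if c \<alpha> \<noteq> 0 then {\<alpha>} else {})" for \<alpha> by auto
  then have "(\<Sum>x\<in>{x\<in>{\<alpha>. c \<alpha> \<noteq> 0}. id x = \<alpha>}. c x) = c \<alpha>" for \<alpha> by simp
  moreover have "in_W_power n d q f
      \<longleftrightarrow> (\<forall>\<alpha>. W_degree d \<alpha> < q \<longrightarrow> (\<Sum>x\<in>{x\<in>{\<alpha>. c \<alpha> \<noteq> 0}. id x = \<alpha>}. c x) = 0)"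
    by (rule in_W_power_iff_coeffs) (use assms in auto)
  ultimately show ?thesis by (metis not_less)
qed

lemma poly_fun_iff_in_W_power_0: "poly_fun n f \<longleftrightarrow> in_W_power n d 0 f"
  unfolding poly_fun_def in_W_power_def by simp

lemma in_W_power_mono: "q \<le> p \<Longrightarrow> in_W_power n d p f \<Longrightarrow> in_W_power n d q f"
  unfolding in_W_power_def by (meson le_trans)

lemma exists_coeff_of_exact_W_degree:
  assumes "finite {\<alpha>. c \<alpha> \<noteq> 0}" "\<forall>\<alpha>. c \<alpha> \<noteq> 0 \<longrightarrow> (\<forall>i\<ge>n. \<alpha> i = 0)"
    and "\<forall>z. f z = (\<Sum>\<alpha>\<in>{\<alpha>. c \<alpha> \<noteq> 0}. c \<alpha> * monom_fun n \<alpha> z)"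
    and "in_W_power n d q f" "\<not> in_W_power n d (Suc q) f"
  shows "\<exists>\<alpha>. c \<alpha> \<noteq> 0 \<and> W_degree d \<alpha> = q"
  using assms(4,5) unfolding in_W_power_iff_poly_coeffs[OF assms(1-3)]
  by (metis le_antisym not_less_eq_eq)

lemma in_W_powerE:
  assumes "in_W_power n d q f"
  obtains c where "finite {\<alpha>. c \<alpha> \<noteq> 0}"
    "\<forall>\<alpha>. c \<alpha> \<noteq> 0 \<longrightarrow> (\<forall>i\<ge>n. \<alpha> i = 0) \<and> q \<le> W_degree d \<alpha>"
    "\<forall>z. f z = (\<Sum>\<alpha>\<in>{\<alpha>. c \<alpha> \<noteq> 0}. c \<alpha> * monom_fun n \<alpha> z)"
  using assms unfolding in_W_power_def by blast

lemma in_W_power_add: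
  assumes "in_W_power n d q f" "in_W_power n d q g"
  shows "in_W_power n d q (\<lambda>z. f z + g z)"
proof -
  obtain c1 where c1: "finite {\<alpha>. c1 \<alpha> \<noteq> 0}"
      "\<forall>\<alpha>. c1 \<alpha> \<noteq> 0 \<longrightarrow> (\<forall>i\<ge>n. \<alpha> i = 0) \<and> q \<le> W_degree d \<alpha>"
      "\<forall>z. f z = (\<Sum>\<alpha>\<in>{\<alpha>. c1 \<alpha> \<noteq> 0}. c1 \<alpha> * monom_fun n \<alpha> z)"
    using assms(1) by (rule in_W_powerE)
  obtain c2 where c2: "finite {\<alpha>. c2 \<alpha> \<noteq> 0}"
      "\<forall>\<alpha>. c2 \<alpha> \<noteq> 0 \<longrightarrow> (\<forall>i\<ge>n. \<alpha> i = 0) \<and> q \<le> W_degree d \<alpha>"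
      "\<forall>z. g z = (\<Sum>\<alpha>\<in>{\<alpha>. c2 \<alpha> \<noteq> 0}. c2 \<alpha> * monom_fun n \<alpha> z)"
    using assms(2) by (rule in_W_powerE)
  show ?thesis
  proof (rule in_W_power_sumI[where X = "{\<alpha>. c1 \<alpha> \<noteq> 0} <+> {\<alpha>. c2 \<alpha> \<noteq> 0}"
        and h = "case_sum c1 c2" and g = "case_sum id id"])
    show "\<forall>z. f z + g z = (\<Sum>x\<in>{\<alpha>. c1 \<alpha> \<noteq> 0} <+> {\<alpha>. c2 \<alpha> \<noteq> 0}.
        case_sum c1 c2 x * monom_fun n (case_sum id id x) z)"
      using c1 c2 by (simp add: sum.Plus o_def)
  qed (use c1 c2 in auto)
qed

lemma in_W_power_mult:
  assumes "in_W_power n d p f" "in_W_power n d q g"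
  shows "in_W_power n d (p + q) (\<lambda>z. f z * g z)"
proof -
  obtain c1 where c1: "finite {\<alpha>. c1 \<alpha> \<noteq> 0}"
      "\<forall>\<alpha>. c1 \<alpha> \<noteq> 0 \<longrightarrow> (\<forall>i\<ge>n. \<alpha> i = 0) \<and> p \<le> W_degree d \<alpha>"
      "\<forall>z. f z = (\<Sum>\<alpha>\<in>{\<alpha>. c1 \<alpha> \<noteq> 0}. c1 \<alpha> * monom_fun n \<alpha> z)"
    using assms(1) by (rule in_W_powerE)
  obtain c2 where c2: "finite {\<alpha>. c2 \<alpha> \<noteq> 0}"
      "\<forall>\<alpha>. c2 \<alpha> \<noteq> 0 \<longrightarrow> (\<forall>i\<ge>n. \<alpha> i = 0) \<and> q \<le> W_degree d \<alpha>"
      "\<forall>z. g z = (\<Sum>\<alpha>\<in>{\<alpha>. c2 \<alpha> \<noteq> 0}. c2 \<alpha> * monom_fun n \<alpha> z)"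
    using assms(2) by (rule in_W_powerE)
  define S1 where "S1 = {\<alpha>. c1 \<alpha> \<noteq> 0}"
  define S2 where "S2 = {\<alpha>. c2 \<alpha> \<noteq> 0}"
  show ?thesis
  proof (rule in_W_power_sumI[where X = "S1 \<times> S2" and h = "\<lambda>(a, b). c1 a * c2 b"
        and g = "\<lambda>(a, b) i. a i + b i"])
    show "\<forall>z. f z * g z = (\<Sum>x\<in>S1 \<times> S2.
        (case x of (a, b) \<Rightarrow> c1 a * c2 b) * monom_fun n (case x of (a, b) \<Rightarrow> \<lambda>i. a i + b i) z)"
    proof
      fix z
      have "f z * g z = (\<Sum>a\<in>S1. \<Sum>b\<in>S2. (c1 a * monom_fun n a z) * (c2 b * monom_fun n b z))"
        using c1(3) c2(3) by (simp add: S1_def S2_def sum_product)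
      also have "\<dots> = (\<Sum>a\<in>S1. \<Sum>b\<in>S2. (c1 a * c2 b) * monom_fun n (\<lambda>i. a i + b i) z)"
        by (simp add: monom_fun_add mult_ac)
      also have "\<dots> = (\<Sum>x\<in>S1 \<times> S2.
          (case x of (a, b) \<Rightarrow> c1 a * c2 b) * monom_fun n (case x of (a, b) \<Rightarrow> \<lambda>i. a i + b i) z)"
        by (simp add: sum.cartesian_product split_def)
      finally show "f z * g z = (\<Sum>x\<in>S1 \<times> S2.
          (case x of (a, b) \<Rightarrow> c1 a * c2 b) * monom_fun n (case x of (a, b) \<Rightarrow> \<lambda>i. a i + b i) z)" .
    qed
  qed (use c1 c2 in \<open>auto simp: S1_def S2_def W_degree_add intro: add_mono\<close>)
qed

lemma in_W_power_const: "in_W_power n d 0 (\<lambda>z. k)"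
  by (rule in_W_power_sumI[where X = "{()}" and h = "\<lambda>_. k" and g = "\<lambda>_ _. 0"])
     (auto simp: monom_fun_def)

lemma in_W_power_var: "i < n \<Longrightarrow> in_W_power n d (if i < d then 1 else 0) (\<lambda>z. z i)"
  by (rule in_W_power_sumI[where X = "{()}" and h = "\<lambda>_. 1" and g = "\<lambda>_ j. if j = i then 1 else 0"])
     (auto simp: monom_fun_def W_degree_def if_distrib[where f = "\<lambda>e. _ ^ e"] prod.delta' cong: if_cong)

lemma in_W_power_sum:
  "finite I \<Longrightarrow> (\<And>i. i \<in> I \<Longrightarrow> in_W_power n d q (F i)) \<Longrightarrow> in_W_power n d q (\<lambda>z. \<Sum>i\<in>I. F i z)"
proof (induction I rule: finite_induct)
  case empty
  show ?case by (rule in_W_power_sumI[where X = "{} :: unit set"]) auto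
next
  case (insert x F)
  then show ?case by (simp add: in_W_power_add)
qed

lemma in_W_power_prod:
  "finite I \<Longrightarrow> (\<And>i. i \<in> I \<Longrightarrow> in_W_power n d (e i) (F i))
    \<Longrightarrow> in_W_power n d (\<Sum>i\<in>I. e i) (\<lambda>z. \<Prod>i\<in>I. F i z)"
proof (induction I rule: finite_induct)
  case empty
  then show ?case using in_W_power_const[of n d 1] by simp
next
  case (insert x F)
  then show ?case by (simp add: in_W_power_mult)
qed

lemma in_W_power_power: "in_W_power n d q f \<Longrightarrow> in_W_power n d (q * k) (\<lambda>z. f z ^ k)"
proof (induction k)
  case 0
  then show ?case using in_W_power_const[of n d 1] by simp
next
  case (Suc k)
  then show ?case using in_W_power_mult[of n d q f "q * k" "\<lambda>z. f z ^ k"] by (simp add: add.commute)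
qed

lemma in_W_power_monom_fun:
  assumes "d \<le> n"
  shows "in_W_power n d (W_degree d a) (monom_fun n a)"
proof -
  have "in_W_power n d (\<Sum>i<n. (if i < d then 1 else 0) * a i) (\<lambda>z. \<Prod>i<n. z i ^ a i)"
    by (intro in_W_power_prod in_W_power_power in_W_power_var) auto
  then show ?thesis unfolding monom_fun_def W_degree_eq_weighted_sum[OF assms] by (simp add: fun_eq_iff)
qed

text \<open>Polynomial maps under which the pull-back of the ideal of \<open>W\<close> stays in that ideal.\<close>
definition W_preserving_map :: "nat \<Rightarrow> nat \<Rightarrow> ((nat \<Rightarrow> complex) \<Rightarrow> (nat \<Rightarrow> complex)) \<Rightarrow> bool" where
  "W_preserving_map n d M \<longleftrightarrow> (\<forall>i<n. in_W_power n d (if i < d then 1 else 0) (\<lambda>z. M z i))"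

lemma in_W_power_comp:
  assumes "d \<le> n" "W_preserving_map n d M" and "in_W_power n d q f"
  shows "in_W_power n d q (\<lambda>z. f (M z))"
proof -
  obtain c where c: "finite {\<alpha>. c \<alpha> \<noteq> 0}"
      "\<forall>\<alpha>. c \<alpha> \<noteq> 0 \<longrightarrow> (\<forall>i\<ge>n. \<alpha> i = 0) \<and> q \<le> W_degree d \<alpha>"
      "\<forall>z. f z = (\<Sum>\<alpha>\<in>{\<alpha>. c \<alpha> \<noteq> 0}. c \<alpha> * monom_fun n \<alpha> z)"
    using assms(3) by (rule in_W_powerE)
  have "in_W_power n d q (\<lambda>z. c \<alpha> * monom_fun n \<alpha> (M z))" if "c \<alpha> \<noteq> 0" for \<alpha>
  proof -
    have "in_W_power n d (\<Sum>i<n. (if i < d then 1 else 0) * \<alpha> i) (\<lambda>z. \<Prod>i<n. M z i ^ \<alpha> i)"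
      using assms(2) unfolding W_preserving_map_def by (intro in_W_power_prod in_W_power_power) auto
    moreover have "q \<le> (\<Sum>i<n. (if i < d then 1 else 0) * \<alpha> i)"
      using c(2) that by (simp add: W_degree_eq_weighted_sum[OF assms(1)])
    ultimately have "in_W_power n d q (\<lambda>z. monom_fun n \<alpha> (M z))"
      unfolding monom_fun_def by (rule in_W_power_mono[rotated])
    then show ?thesis using in_W_power_mult[OF in_W_power_const] by fastforce
  qed
  then have "in_W_power n d q (\<lambda>z. \<Sum>\<alpha>\<in>{\<alpha>. c \<alpha> \<noteq> 0}. c \<alpha> * monom_fun n \<alpha> (M z))"
    using c(1) by (intro in_W_power_sum) auto
  then show ?thesis using c(3) by simp
qed

section \<open>Multiplicity along \<open>W\<close>\<close>

lemma finite_multi_idx: "finite (multi_idx d q)"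
proof -
  let ?extend = "\<lambda>xs i. if i < d then xs ! i else 0"
  have "multi_idx d q \<subseteq> ?extend ` {xs. set xs \<subseteq> {..q} \<and> length xs = d}"
  proof
    fix a assume a: "a \<in> multi_idx d q"
    then have "a i \<le> q" if "i < d" for i
      using member_le_sum[of i "{..<d}" a] that by (auto simp: multi_idx_def)
    then have "map a [0..<d] \<in> {xs. set xs \<subseteq> {..q} \<and> length xs = d}" by auto
    moreover have "a = ?extend (map a [0..<d])" using a by (auto simp: multi_idx_def fun_eq_iff)
    ultimately show "a \<in> ?extend ` {xs. set xs \<subseteq> {..q} \<and> length xs = d}" by blast
  qed
  then show ?thesis by (rule finite_subset) (intro finite_imageI finite_lists_length_eq, simp)
qed

lemma exists_multi_idx_le: "q \<le> W_degree d \<alpha> \<Longrightarrow> \<exists>a\<in>multi_idx d q. \<forall>i. a i \<le> \<alpha> i"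
proof (induction q)
  case 0
  show ?case by (rule bexI[of _ "\<lambda>_. 0"]) (simp_all add: multi_idx_def)
next
  case (Suc q)
  then obtain a where a: "a \<in> multi_idx d q" "\<forall>i. a i \<le> \<alpha> i" by auto
  have "\<exists>j<d. a j < \<alpha> j"
  proof (rule ccontr)
    assume "\<not> ?thesis"
    then have "(\<Sum>i<d. \<alpha> i) \<le> (\<Sum>i<d. a i)" using a(2) by (intro sum_mono) (meson lessThan_iff not_less)
    then show False using a(1) Suc.prems by (simp add: multi_idx_def W_degree_def)
  qed
  then obtain j where j: "j < d" "a j < \<alpha> j" by auto
  define a' where "a' i = a i + (if i = j then 1 else 0)" for i
  have "(\<Sum>i<d. a' i) = (\<Sum>i<d. a i) + 1" using j(1) by (simp add: a'_def sum.distrib)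
  then have "a' \<in> multi_idx d (Suc q)" using a(1) j(1) by (auto simp: multi_idx_def a'_def)
  moreover have "\<forall>i. a' i \<le> \<alpha> i" using a(2) j(2) by (auto simp: a'_def)
  ultimately show ?case by blast
qed

lemma mult_rep_imp_in_W_power:
  assumes "d \<le> n" "mult_rep n d f q"
  shows "in_W_power n d q f"
proof -
  obtain Pa where Pa: "\<forall>a\<in>multi_idx d q. poly_fun n (Pa a)"
    and rep: "\<forall>z. f z = (\<Sum>a\<in>multi_idx d q. (\<Prod>i<d. z i ^ a i) * Pa a z)"
    using assms(2) unfolding mult_rep_def by blast
  have "in_W_power n d (q + 0) (\<lambda>z. monom_fun n a z * Pa a z)" if "a \<in> multi_idx d q" for a
  proof (rule in_W_power_mult)
    show "in_W_power n d q (monom_fun n a)"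
      using in_W_power_monom_fun[OF assms(1), of a] that by (simp add: multi_idx_def W_degree_def)
    show "in_W_power n d 0 (Pa a)" using Pa that poly_fun_iff_in_W_power_0 by blast
  qed
  then have "in_W_power n d q (\<lambda>z. \<Sum>a\<in>multi_idx d q. monom_fun n a z * Pa a z)"
    by (intro in_W_power_sum finite_multi_idx) simp
  moreover have "f = (\<lambda>z. \<Sum>a\<in>multi_idx d q. monom_fun n a z * Pa a z)"
    using rep monom_fun_multi_idx[OF _ assms(1)] by (simp add: fun_eq_iff)
  ultimately show ?thesis by simp
qed

lemma sum_monom_fun_mult_expand:
  assumes "finite A" "\<forall>a\<in>A. finite (S a)"
  shows "(\<Sum>a\<in>A. monom_fun n a z * (\<Sum>\<beta>\<in>S a. c a \<beta> * monom_fun n \<beta> z))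
    = (\<Sum>(a, \<beta>)\<in>Sigma A S. c a \<beta> * monom_fun n (\<lambda>i. a i + \<beta> i) z)"
proof -
  have "(\<Sum>a\<in>A. monom_fun n a z * (\<Sum>\<beta>\<in>S a. c a \<beta> * monom_fun n \<beta> z))
      = (\<Sum>a\<in>A. \<Sum>\<beta>\<in>S a. c a \<beta> * monom_fun n (\<lambda>i. a i + \<beta> i) z)"
    by (simp add: sum_distrib_left monom_fun_add mult_ac)
  also have "\<dots> = (\<Sum>(a, \<beta>)\<in>Sigma A S. c a \<beta> * monom_fun n (\<lambda>i. a i + \<beta> i) z)"
    using assms by (rule sum.Sigma)
  finally show ?thesis .
qed

lemma multi_idx_add_eq_cancel:
  assumes "a \<in> multi_idx d q" "a' \<in> multi_idx d q" "\<forall>i<d. \<beta>' i = 0"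
    and "(\<lambda>i. a i + \<beta> i) = (\<lambda>i. a' i + \<beta>' i)"
  shows "a = a' \<and> \<beta> = \<beta>'"
proof -
  have "W_degree d (\<lambda>i. a i + \<beta> i) = W_degree d (\<lambda>i. a' i + \<beta>' i)" using assms(4) by simp
  then have "W_degree d \<beta> = 0"
    using assms(1-3) by (simp add: W_degree_add W_degree_eq_0_iff multi_idx_def W_degree_def)
  then have "a i = a' i" for i
    using assms fun_cong[OF assms(4), of i] by (cases "i < d") (auto simp: W_degree_eq_0_iff multi_idx_def)
  then show ?thesis using assms(4) by (auto simp: fun_eq_iff)
qed

lemma not_in_W_power_Suc_if_mult_rep:
  assumes dn: "d \<le> n" and "mult_rep n d f q"
  shows "\<not> in_W_power n d (Suc q) f"
proof
  assume in_Suc: "in_W_power n d (Suc q) f"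
  define MI where "MI = multi_idx d q"
  obtain Pa where Pa: "\<forall>a\<in>MI. poly_fun n (Pa a)"
    and rep: "\<forall>z. f z = (\<Sum>a\<in>MI. (\<Prod>i<d. z i ^ a i) * Pa a z)"
    and nz: "\<exists>a\<in>MI. \<exists>z. (\<forall>i<d. z i = 0) \<and> Pa a z \<noteq> 0"
    using assms(2) unfolding mult_rep_def MI_def by blast
  obtain c where c: "\<forall>a\<in>MI. finite {\<beta>. c a \<beta> \<noteq> 0} \<and> (\<forall>\<beta>. c a \<beta> \<noteq> 0 \<longrightarrow> (\<forall>i\<ge>n. \<beta> i = 0)) \<and>
      (\<forall>z. Pa a z = (\<Sum>\<beta>\<in>{\<beta>. c a \<beta> \<noteq> 0}. c a \<beta> * monom_fun n \<beta> z))"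
    using bchoice[OF Pa[unfolded poly_fun_def]] by blast
  define X where "X = Sigma MI (\<lambda>a. {\<beta>. c a \<beta> \<noteq> 0})"
  have fin_X: "finite X" unfolding X_def using finite_multi_idx c by (auto simp: MI_def)
  have rep_X: "\<forall>z. f z = (\<Sum>x\<in>X. (case x of (a, \<beta>) \<Rightarrow> c a \<beta>)
      * monom_fun n (case x of (a, \<beta>) \<Rightarrow> \<lambda>i. a i + \<beta> i) z)"
  proof
    fix z
    have "f z = (\<Sum>a\<in>MI. monom_fun n a z * (\<Sum>\<beta>\<in>{\<beta>. c a \<beta> \<noteq> 0}. c a \<beta> * monom_fun n \<beta> z))"
      using rep c monom_fun_multi_idx[OF _ dn] by (simp add: MI_def)
    also have "\<dots> = (\<Sum>(a, \<beta>)\<in>X. c a \<beta> * monom_fun n (\<lambda>i. a i + \<beta> i) z)"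
      unfolding X_def by (rule sum_monom_fun_mult_expand) (use c finite_multi_idx in \<open>auto simp: MI_def\<close>)
    finally show "f z = (\<Sum>x\<in>X. (case x of (a, \<beta>) \<Rightarrow> c a \<beta>)
        * monom_fun n (case x of (a, \<beta>) \<Rightarrow> \<lambda>i. a i + \<beta> i) z)"
      by (simp add: split_def)
  qed
  obtain a0 z0 where a0: "a0 \<in> MI" "\<forall>i<d. z0 i = 0" "Pa a0 z0 \<noteq> 0" using nz by blast
  then have "(\<Sum>\<beta>\<in>{\<beta>. c a0 \<beta> \<noteq> 0}. c a0 \<beta> * monom_fun n \<beta> z0) \<noteq> 0" using c by simp
  then obtain \<beta>0 where "c a0 \<beta>0 * monom_fun n \<beta>0 z0 \<noteq> 0" by (meson sum.neutral)
  then have \<beta>0: "c a0 \<beta>0 \<noteq> 0" "monom_fun n \<beta>0 z0 \<noteq> 0" by auto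
  have \<beta>0_W: "\<forall>i<d. \<beta>0 i = 0" using monom_fun_nonzero_on_W[OF dn a0(2) \<beta>0(2)] .
  have single: "{x\<in>X. (case x of (a, \<beta>) \<Rightarrow> \<lambda>i. a i + \<beta> i) = (\<lambda>i. a0 i + \<beta>0 i)} = {(a0, \<beta>0)}"
    using multi_idx_add_eq_cancel[of _ d q a0 \<beta>0] a0(1) \<beta>0(1) \<beta>0_W by (auto simp: X_def MI_def)
  have "W_degree d (\<lambda>i. a0 i + \<beta>0 i) < Suc q"
    using a0(1) \<beta>0_W by (simp add: W_degree_add W_degree_eq_0_iff MI_def multi_idx_def W_degree_def)
  moreover have "\<forall>x\<in>X. \<forall>i\<ge>n. (case x of (a, \<beta>) \<Rightarrow> \<lambda>i. a i + \<beta> i) i = 0"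
    using c dn by (auto simp: X_def MI_def multi_idx_def)
  ultimately have "(\<Sum>x\<in>{x\<in>X. (case x of (a, \<beta>) \<Rightarrow> \<lambda>i. a i + \<beta> i) = (\<lambda>i. a0 i + \<beta>0 i)}.
      case x of (a, \<beta>) \<Rightarrow> c a \<beta>) = 0"
    using in_Suc in_W_power_iff_coeffs[OF fin_X _ rep_X] by blast
  then have "c a0 \<beta>0 = 0" by (simp only: single) simp
  with \<beta>0(1) show False ..
qed

lemma sum_monom_fun_split_multi_idx:
  assumes dn: "d \<le> n" and fin: "finite S"
    and sel: "\<forall>\<alpha>\<in>S. sel \<alpha> \<in> multi_idx d q \<and> (\<forall>i. sel \<alpha> i \<le> \<alpha> i)"
  shows "(\<Sum>\<alpha>\<in>S. c \<alpha> * monom_fun n \<alpha> z)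
    = (\<Sum>a\<in>multi_idx d q. (\<Prod>i<d. z i ^ a i)
        * (\<Sum>\<alpha>\<in>{\<alpha>\<in>S. sel \<alpha> = a}. c \<alpha> * monom_fun n (\<lambda>i. \<alpha> i - a i) z))"
proof -
  have split_monom: "monom_fun n a z * monom_fun n (\<lambda>i. \<alpha> i - a i) z = monom_fun n \<alpha> z"
    if "\<alpha> \<in> S" "sel \<alpha> = a" for a \<alpha>
  proof -
    have "(\<lambda>i. a i + (\<alpha> i - a i)) = \<alpha>" using sel that by (auto simp: fun_eq_iff)
    then show ?thesis using monom_fun_add[of n a "\<lambda>i. \<alpha> i - a i" z] by simp
  qed
  have "(\<Sum>a\<in>multi_idx d q. (\<Prod>i<d. z i ^ a i)
        * (\<Sum>\<alpha>\<in>{\<alpha>\<in>S. sel \<alpha> = a}. c \<alpha> * monom_fun n (\<lambda>i. \<alpha> i - a i) z))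
      = (\<Sum>a\<in>multi_idx d q. \<Sum>\<alpha>\<in>{\<alpha>\<in>S. sel \<alpha> = a}.
          c \<alpha> * (monom_fun n a z * monom_fun n (\<lambda>i. \<alpha> i - a i) z))"
    using monom_fun_multi_idx[OF _ dn] by (simp add: sum_distrib_left mult_ac)
  also have "\<dots> = (\<Sum>a\<in>multi_idx d q. \<Sum>\<alpha>\<in>{\<alpha>\<in>S. sel \<alpha> = a}. c \<alpha> * monom_fun n \<alpha> z)"
    using split_monom by (intro sum.cong refl) auto
  also have "\<dots> = (\<Sum>\<alpha>\<in>S. c \<alpha> * monom_fun n \<alpha> z)"
    by (rule sum.group) (use fin finite_multi_idx sel in auto)
  finally show ?thesis by simp
qed

lemma sum_monom_fun_shift_nonzero_on_W:
  assumes dn: "d \<le> n" and fin: "finite X" and supp: "\<forall>\<alpha>\<in>X. \<forall>i\<ge>n. \<alpha> i = 0"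
    and ge: "\<forall>\<alpha>\<in>X. \<forall>i. a i \<le> \<alpha> i"
    and \<alpha>0: "\<alpha>0 \<in> X" "c \<alpha>0 \<noteq> 0" "\<forall>i<d. \<alpha>0 i = a i"
  shows "\<exists>z. (\<forall>i<d. z i = 0) \<and> (\<Sum>\<alpha>\<in>X. c \<alpha> * monom_fun n (\<lambda>i. \<alpha> i - a i) z) \<noteq> 0"
proof (rule ccontr)
  assume no_point: "\<not> ?thesis"
  have vanish: "(\<Sum>\<alpha>\<in>X. c \<alpha> * monom_fun n (\<lambda>i. \<alpha> i - a i) (\<lambda>i. if i < d then 0 else z i)) = 0"
    for z using no_point[unfolded not_ex, rule_format, of "\<lambda>i. if i < d then 0 else z i"] by simp
  define h where "h \<alpha> = (if \<forall>i<d. \<alpha> i = a i then c \<alpha> else 0)" for \<alpha>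
  have "(\<Sum>\<alpha>\<in>{\<alpha>\<in>X. (\<lambda>i. \<alpha> i - a i) = (\<lambda>i. \<alpha>0 i - a i)}. h \<alpha>) = 0"
  proof (rule sum_monom_fun_eq_0_coeff)
    show "\<forall>\<alpha>\<in>X. \<forall>i\<ge>n. \<alpha> i - a i = 0" using supp by auto
    \<comment> \<open>Restricting to \<open>W\<close> keeps exactly the terms whose exponent agrees with \<open>a\<close> on \<open>W\<close>.\<close>
    have "c \<alpha> * monom_fun n (\<lambda>i. \<alpha> i - a i) (\<lambda>i. if i < d then 0 else z i)
        = h \<alpha> * monom_fun n (\<lambda>i. \<alpha> i - a i) z" if "\<alpha> \<in> X" for \<alpha> z
      using ge that by (auto simp: h_def monom_fun_restrict_W[OF dn] le_antisym)
    then show "\<forall>z. (\<Sum>\<alpha>\<in>X. h \<alpha> * monom_fun n (\<lambda>i. \<alpha> i - a i) z) = 0"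
      using vanish by (metis (no_types, lifting) sum.cong)
  qed (use fin in simp)
  moreover have "{\<alpha>\<in>X. (\<lambda>i. \<alpha> i - a i) = (\<lambda>i. \<alpha>0 i - a i)} = {\<alpha>0}"
  proof -
    have "\<alpha> = \<alpha>0" if "\<alpha> \<in> X" "(\<lambda>i. \<alpha> i - a i) = (\<lambda>i. \<alpha>0 i - a i)" for \<alpha>
    proof
      fix i
      have "\<alpha> i - a i = \<alpha>0 i - a i" using fun_cong[OF that(2), of i] by simp
      then show "\<alpha> i = \<alpha>0 i" using ge that(1) \<alpha>0(1) by (metis le_add_diff_inverse)
    qed
    then show ?thesis using \<alpha>0(1) by auto
  qed
  ultimately show False using \<alpha>0(2,3) by (simp add: h_def)
qed

lemma eq_on_W_if_le_W_degree:
  assumes "\<forall>i. a i \<le> \<alpha> i" "W_degree d \<alpha> \<le> W_degree d a"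
  shows "\<forall>i<d. \<alpha> i = a i"
proof -
  have "(\<Sum>i<d. \<alpha> i - a i) = W_degree d \<alpha> - W_degree d a"
    using assms(1) unfolding W_degree_def by (intro sum_subtractf_nat) auto
  then show ?thesis using assms by (simp add: le_antisym)
qed

lemma mult_rep_if_exact_W_power:
  assumes dn: "d \<le> n" and "poly_fun n f"
    and "in_W_power n d q f" "\<not> in_W_power n d (Suc q) f"
  shows "mult_rep n d f q"
proof -
  obtain c where c: "finite {\<alpha>. c \<alpha> \<noteq> 0}" "\<forall>\<alpha>. c \<alpha> \<noteq> 0 \<longrightarrow> (\<forall>i\<ge>n. \<alpha> i = 0)"
      "\<forall>z. f z = (\<Sum>\<alpha>\<in>{\<alpha>. c \<alpha> \<noteq> 0}. c \<alpha> * monom_fun n \<alpha> z)"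
    using assms(2) unfolding poly_fun_def by blast
  define S where "S = {\<alpha>. c \<alpha> \<noteq> 0}"
  have "\<forall>\<alpha>\<in>S. q \<le> W_degree d \<alpha>"
    using assms(3) in_W_power_iff_poly_coeffs[OF c] by (simp add: S_def)
  then obtain sel where sel: "\<forall>\<alpha>\<in>S. sel \<alpha> \<in> multi_idx d q \<and> (\<forall>i. sel \<alpha> i \<le> \<alpha> i)"
    using bchoice[of S "\<lambda>\<alpha> a. a \<in> multi_idx d q \<and> (\<forall>i. a i \<le> \<alpha> i)"] exists_multi_idx_le by blast
  obtain \<alpha>0 where \<alpha>0: "c \<alpha>0 \<noteq> 0" "W_degree d \<alpha>0 = q"
    using exists_coeff_of_exact_W_degree[OF c assms(3,4)] by blast
  define Pa where "Pa a z = (\<Sum>\<alpha>\<in>{\<alpha>\<in>S. sel \<alpha> = a}. c \<alpha> * monom_fun n (\<lambda>i. \<alpha> i - a i) z)" for a z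
  have "poly_fun n (Pa a)" for a
    unfolding poly_fun_iff_in_W_power_0[where d = d]
    by (rule in_W_power_sumI[where X = "{\<alpha>\<in>S. sel \<alpha> = a}" and h = c and g = "\<lambda>\<alpha> i. \<alpha> i - a i"])
       (use c in \<open>auto simp: Pa_def S_def\<close>)
  moreover have "\<forall>z. f z = (\<Sum>a\<in>multi_idx d q. (\<Prod>i<d. z i ^ a i) * Pa a z)"
    using c(3) sum_monom_fun_split_multi_idx[OF dn _ sel] c(1) by (simp add: Pa_def S_def)
  moreover have "\<exists>z. (\<forall>i<d. z i = 0) \<and> Pa (sel \<alpha>0) z \<noteq> 0"
  proof -
    have "\<alpha>0 \<in> S" "sel \<alpha>0 \<in> multi_idx d q" "\<forall>i. sel \<alpha>0 i \<le> \<alpha>0 i"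
      using \<alpha>0(1) sel by (auto simp: S_def)
    moreover from this have "\<forall>i<d. \<alpha>0 i = sel \<alpha>0 i"
      using \<alpha>0(2) by (intro eq_on_W_if_le_W_degree) (simp_all add: multi_idx_def W_degree_def)
    ultimately show ?thesis unfolding Pa_def
      by (intro sum_monom_fun_shift_nonzero_on_W[OF dn]) (use c sel \<alpha>0(1) in \<open>auto simp: S_def\<close>)
  qed
  moreover have "sel \<alpha>0 \<in> multi_idx d q" using sel \<alpha>0(1) by (simp add: S_def)
  ultimately show ?thesis unfolding mult_rep_def by blast
qed

lemma mult_rep_iff:
  assumes "d \<le> n" "poly_fun n f"
  shows "mult_rep n d f q \<longleftrightarrow> in_W_power n d q f \<and> \<not> in_W_power n d (Suc q) f"
  using mult_rep_imp_in_W_power not_in_W_power_Suc_if_mult_rep mult_rep_if_exact_W_power assms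
  by blast

lemma enat_le_multW_iff:
  assumes "d \<le> n" "poly_fun n f"
  shows "enat q \<le> multW n d f \<longleftrightarrow> in_W_power n d q f"
proof (cases "\<forall>p. in_W_power n d p f")
  case True
  then have "multW n d f = \<infinity>" using mult_rep_iff[OF assms] by (simp add: multW_def)
  with True show ?thesis by simp
next
  case False
  then obtain p where "\<not> in_W_power n d p f" by blast
  moreover have "in_W_power n d 0 f" using assms(2) poly_fun_iff_in_W_power_0 by blast
  ultimately obtain q0 where q0: "in_W_power n d q0 f" "\<not> in_W_power n d (Suc q0) f"
    using ex_least_nat_less[of "\<lambda>p. \<not> in_W_power n d p f" p] by auto
  have in_iff: "in_W_power n d p f \<longleftrightarrow> p \<le> q0" for p
    using in_W_power_mono[of p q0] in_W_power_mono[of "Suc q0" p] q0 by (meson not_less_eq_eq)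
  then have "mult_rep n d f = (\<lambda>p. p = q0)"
    using mult_rep_iff[OF assms] by (auto simp: fun_eq_iff not_less_eq_eq)
  then have "multW n d f = enat q0" unfolding multW_def by (auto intro: Least_equality)
  then show ?thesis using in_iff by simp
qed

lemma multW_eqI:
  assumes "d \<le> n" "poly_fun n f" "poly_fun n g"
    and "\<And>q. in_W_power n d q f \<longleftrightarrow> in_W_power n d q g"
  shows "multW n d f = multW n d g"
proof -
  have "mult_rep n d f = mult_rep n d g"
    using mult_rep_iff[OF assms(1,2)] mult_rep_iff[OF assms(1,3)] assms(4) by (simp add: fun_eq_iff)
  then show ?thesis by (simp add: multW_def)
qed

lemma sum_monom_fun_lincomb:
  assumes "finite {\<alpha>. c1 \<alpha> \<noteq> 0}" "finite {\<alpha>. c2 \<alpha> \<noteq> 0}"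
  shows "(\<Sum>\<alpha>\<in>{\<alpha>. c1 \<alpha> \<noteq> 0}. c1 \<alpha> * monom_fun n \<alpha> z)
      + t * (\<Sum>\<alpha>\<in>{\<alpha>. c2 \<alpha> \<noteq> 0}. c2 \<alpha> * monom_fun n \<alpha> z)
    = (\<Sum>\<alpha>\<in>{\<alpha>. c1 \<alpha> + t * c2 \<alpha> \<noteq> 0}. (c1 \<alpha> + t * c2 \<alpha>) * monom_fun n \<alpha> z)"
proof -
  define U where "U = {\<alpha>. c1 \<alpha> \<noteq> 0} \<union> {\<alpha>. c2 \<alpha> \<noteq> 0}"
  have fin_U: "finite U" using assms by (simp add: U_def)
  have extend: "(\<Sum>\<alpha>\<in>{\<alpha>. c \<alpha> \<noteq> 0}. c \<alpha> * monom_fun n \<alpha> z) = (\<Sum>\<alpha>\<in>U. c \<alpha> * monom_fun n \<alpha> z)"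
    if "{\<alpha>. c \<alpha> \<noteq> 0} \<subseteq> U" for c :: "(nat \<Rightarrow> nat) \<Rightarrow> complex"
    by (rule sum.mono_neutral_left) (use fin_U that in auto)
  have "(\<Sum>\<alpha>\<in>{\<alpha>. c1 \<alpha> + t * c2 \<alpha> \<noteq> 0}. (c1 \<alpha> + t * c2 \<alpha>) * monom_fun n \<alpha> z)
      = (\<Sum>\<alpha>\<in>U. (c1 \<alpha> + t * c2 \<alpha>) * monom_fun n \<alpha> z)"
  proof -
    have "{\<alpha>. c1 \<alpha> + t * c2 \<alpha> \<noteq> 0} \<subseteq> U" by (auto simp: U_def)
    then show ?thesis using extend[of "\<lambda>\<alpha>. c1 \<alpha> + t * c2 \<alpha>"] by simp
  qed
  moreover have "(\<Sum>\<alpha>\<in>U. (c1 \<alpha> + t * c2 \<alpha>) * monom_fun n \<alpha> z)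
      = (\<Sum>\<alpha>\<in>U. c1 \<alpha> * monom_fun n \<alpha> z) + t * (\<Sum>\<alpha>\<in>U. c2 \<alpha> * monom_fun n \<alpha> z)"
    by (simp add: sum.distrib sum_distrib_left algebra_simps)
  ultimately show ?thesis using extend[of c1] extend[of c2] by (simp add: U_def)
qed

text \<open>Adding a generic multiple of a polynomial of lower multiplicity: only the value of
  \<open>t\<close> cancelling the leading coefficient of \<open>g\<close> against that of \<open>f\<close> can raise the
  multiplicity.\<close>
lemma multW_add_generic_multiple:
  assumes dn: "d \<le> n" and f: "poly_fun n f" and g: "poly_fun n g"
    and le: "multW n d g \<le> multW n d f"
  shows "\<exists>t0. \<forall>t. t \<noteq> t0 \<longrightarrow> multW n d (\<lambda>z. f z + t * g z) = multW n d g"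
proof -
  obtain cf where cf: "finite {\<alpha>. cf \<alpha> \<noteq> 0}" "\<forall>\<alpha>. cf \<alpha> \<noteq> 0 \<longrightarrow> (\<forall>i\<ge>n. \<alpha> i = 0)"
      "\<forall>z. f z = (\<Sum>\<alpha>\<in>{\<alpha>. cf \<alpha> \<noteq> 0}. cf \<alpha> * monom_fun n \<alpha> z)"
    using f unfolding poly_fun_def by blast
  obtain cg where cg: "finite {\<alpha>. cg \<alpha> \<noteq> 0}" "\<forall>\<alpha>. cg \<alpha> \<noteq> 0 \<longrightarrow> (\<forall>i\<ge>n. \<alpha> i = 0)"
      "\<forall>z. g z = (\<Sum>\<alpha>\<in>{\<alpha>. cg \<alpha> \<noteq> 0}. cg \<alpha> * monom_fun n \<alpha> z)"
    using g unfolding poly_fun_def by blast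
  have in_f_if_in_g: "in_W_power n d q f" if "in_W_power n d q g" for q
    using that le enat_le_multW_iff[OF dn f] enat_le_multW_iff[OF dn g] by (meson order_trans)
  have in_sum_if_in_g: "in_W_power n d q (\<lambda>z. f z + t * g z)" if "in_W_power n d q g" for q t
    using in_W_power_add[OF in_f_if_in_g[OF that] in_W_power_mult[OF in_W_power_const that, simplified]] .
  have poly_sum: "poly_fun n (\<lambda>z. f z + t * g z)" for t
    using in_sum_if_in_g g poly_fun_iff_in_W_power_0 by blast
  show ?thesis
  proof (cases "multW n d g")
    case infinity
    then have "in_W_power n d q g" for q using enat_le_multW_iff[OF dn g] by simp
    then show ?thesis using in_sum_if_in_g by (intro exI allI impI multW_eqI[OF dn poly_sum g]) auto
  next
    case (enat m)
    then obtain \<alpha> where \<alpha>: "cg \<alpha> \<noteq> 0" "W_degree d \<alpha> = m"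
      using exists_coeff_of_exact_W_degree[OF cg] enat_le_multW_iff[OF dn g] by force
    have "multW n d (\<lambda>z. f z + t * g z) = multW n d g" if t: "t \<noteq> - cf \<alpha> / cg \<alpha>" for t
    proof (rule multW_eqI[OF dn poly_sum g])
      fix q
      define c where "c \<beta> = cf \<beta> + t * cg \<beta>" for \<beta>
      have c_rep: "\<forall>z. f z + t * g z = (\<Sum>\<beta>\<in>{\<beta>. c \<beta> \<noteq> 0}. c \<beta> * monom_fun n \<beta> z)"
        using cf(3) cg(3) sum_monom_fun_lincomb[OF cf(1) cg(1)] by (simp add: c_def)
      have c_fin: "finite {\<beta>. c \<beta> \<noteq> 0}"
        by (rule finite_subset[of _ "{\<beta>. cf \<beta> \<noteq> 0} \<union> {\<beta>. cg \<beta> \<noteq> 0}"]) (use cf cg in \<open>auto simp: c_def\<close>)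
      have c_supp: "\<forall>\<beta>. c \<beta> \<noteq> 0 \<longrightarrow> (\<forall>i\<ge>n. \<beta> i = 0)" using cf(2) cg(2) unfolding c_def by (metis add_0 mult_zero_right)
      have "c \<alpha> \<noteq> 0" using t \<alpha>(1) by (auto simp: c_def field_simps add_eq_0_iff)
      show "in_W_power n d q (\<lambda>z. f z + t * g z) \<longleftrightarrow> in_W_power n d q g"
      proof
        assume "in_W_power n d q (\<lambda>z. f z + t * g z)"
        then have "q \<le> m"
          using in_W_power_iff_poly_coeffs[OF c_fin c_supp c_rep] \<open>c \<alpha> \<noteq> 0\<close> \<alpha>(2) by blast
        then show "in_W_power n d q g" using enat enat_le_multW_iff[OF dn g] by simp
      qed (rule in_sum_if_in_g)
    qed
    then show ?thesis by blast
  qed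
qed

section \<open>Linear changes of coordinates preserving \<open>W\<close>\<close>

lemma W_preserving_map_comp_poly_fun:
  assumes "d \<le> n" "W_preserving_map n d M" "poly_fun n f"
  shows "poly_fun n (\<lambda>z. f (M z))"
  using in_W_power_comp[OF assms(1,2)] assms(3) poly_fun_iff_in_W_power_0 by blast

lemma multW_comp_invertible:
  assumes dn: "d \<le> n" and f: "poly_fun n f"
    and M: "W_preserving_map n d M" and M': "W_preserving_map n d M'"
    and inv: "\<And>z i. i < n \<Longrightarrow> M (M' z) i = z i"
  shows "multW n d (\<lambda>z. f (M z)) = multW n d f"
proof (rule multW_eqI[OF dn W_preserving_map_comp_poly_fun[OF dn M f] f])
  fix q
  have "(\<lambda>z. f (M (M' z))) = f" using poly_fun_cong[OF f] inv by (simp add: fun_eq_iff)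
  then show "in_W_power n d q (\<lambda>z. f (M z)) \<longleftrightarrow> in_W_power n d q f"
    using in_W_power_comp[OF dn M, of q f] in_W_power_comp[OF dn M', of q "\<lambda>z. f (M z)"] by auto
qed

text \<open>Row \<open>i\<close> of \<open>row_mix_mat s \<kappa>\<close> is \<open>e\<^sub>i + s e\<^bsub>\<kappa> i\<^esub>\<close>: the new \<open>i\<close>-th component
  of the vector field is \<open>P\<^sub>i + s P\<^bsub>\<kappa> i\<^esub>\<close>.\<close>
definition row_mix_mat :: "complex \<Rightarrow> (nat \<Rightarrow> nat) \<Rightarrow> nat \<Rightarrow> nat \<Rightarrow> complex" where
  "row_mix_mat s \<kappa> i k = (if i = k then 1 else 0) + (if k = \<kappa> i then s else 0)"

lemma row_mix_mat_row_sum: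
  assumes "i < n" "\<kappa> i < n"
  shows "(\<Sum>k<n. row_mix_mat s \<kappa> i k * x k) = x i + s * x (\<kappa> i)"
proof -
  have "(\<Sum>k<n. row_mix_mat s \<kappa> i k * x k)
      = (\<Sum>k<n. (if k = i then x i else 0) + (if k = \<kappa> i then s * x (\<kappa> i) else 0))"
    by (intro sum.cong) (auto simp: row_mix_mat_def algebra_simps)
  also have "\<dots> = x i + s * x (\<kappa> i)" using assms by (simp add: sum.distrib)
  finally show ?thesis .
qed

lemma matvec_row_mix_mat:
  assumes "\<forall>i<n. \<kappa> i < n"
  shows "matvec n (row_mix_mat s \<kappa>) z = (\<lambda>i. if i < n then z i + s * z (\<kappa> i) else 0)"
  using row_mix_mat_row_sum assms by (auto simp: matvec_def fun_eq_iff)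

text \<open>For idempotent \<open>\<kappa>\<close> the product of the matrices with parameters \<open>a\<close> and \<open>b\<close> is
  the one with parameter \<open>a + b + a b\<close>.\<close>
lemma inverse_mats_row_mix_mat:
  assumes kn: "\<forall>i<n. \<kappa> i < n" and idem: "\<forall>i. \<kappa> (\<kappa> i) = \<kappa> i"
    and cancel: "s + s' + s * s' = 0"
  shows "inverse_mats n (row_mix_mat s \<kappa>) (row_mix_mat s' \<kappa>)"
  unfolding inverse_mats_def
proof (intro allI impI conjI)
  fix i j assume ij: "i < n" "j < n"
  have prod: "(\<Sum>k<n. row_mix_mat a \<kappa> i k * row_mix_mat b \<kappa> k j)
      = (if i = j then 1 else 0) + (if j = \<kappa> i then a + b + a * b else 0)" for a b
    using row_mix_mat_row_sum[of i n \<kappa> a "\<lambda>k. row_mix_mat b \<kappa> k j"] ij kn idem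
    by (auto simp: row_mix_mat_def algebra_simps)
  have cancel': "s' + s + s' * s = 0" using cancel by (simp add: algebra_simps)
  show "(\<Sum>k<n. row_mix_mat s \<kappa> i k * row_mix_mat s' \<kappa> k j) = (if i = j then 1 else 0)"
    using prod[of s s'] cancel by simp
  show "(\<Sum>k<n. row_mix_mat s' \<kappa> i k * row_mix_mat s \<kappa> k j) = (if i = j then 1 else 0)"
    using prod[of s' s] cancel' by simp
qed

lemma matvec_row_mix_mat_inverse:
  assumes kn: "\<forall>i<n. \<kappa> i < n" and idem: "\<forall>i. \<kappa> (\<kappa> i) = \<kappa> i"
    and cancel: "s + s' + s * s' = 0" and "i < n"
  shows "matvec n (row_mix_mat s \<kappa>) (matvec n (row_mix_mat s' \<kappa>) z) i = z i"
proof -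
  have "matvec n (row_mix_mat s \<kappa>) (matvec n (row_mix_mat s' \<kappa>) z) i
      = z i + (s + s' + s * s') * z (\<kappa> i)"
    using kn idem assms(4) by (simp add: matvec_row_mix_mat[OF kn] algebra_simps)
  then show ?thesis using cancel by simp
qed

lemma row_mix_param_inverse: "s \<noteq> -1 \<Longrightarrow> s + - (s / (1 + s)) + s * - (s / (1 + s)) = (0 :: complex)"
proof -
  assume "s \<noteq> -1"
  then have "1 + s \<noteq> 0" by (metis add.commute add_eq_0_iff)
  then show ?thesis by (simp add: field_simps)
qed

lemma row_mix_mat_image_Wset:
  assumes kn: "\<forall>i<n. \<kappa> i < n" and kd: "\<forall>i<d. \<kappa> i < d"
    and idem: "\<forall>i. \<kappa> (\<kappa> i) = \<kappa> i" and cancel: "s + s' + s * s' = 0"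
  shows "matvec n (row_mix_mat s \<kappa>) ` Wset n d = Wset n d"
proof -
  have into: "matvec n (row_mix_mat a \<kappa>) z \<in> Wset n d" if "z \<in> Wset n d" for a z
    using that kd by (auto simp: Wset_def matvec_row_mix_mat[OF kn])
  have "w = matvec n (row_mix_mat s \<kappa>) (matvec n (row_mix_mat s' \<kappa>) w)"
    if "w \<in> Wset n d" for w
    using that matvec_row_mix_mat_inverse[OF kn idem cancel] by (auto simp: fun_eq_iff Wset_def matvec_def)
  then show ?thesis using into by blast
qed

lemma W_preserving_map_row_mix_mat:
  assumes kn: "\<forall>i<n. \<kappa> i < n" and kd: "\<forall>i<d. \<kappa> i < d"
  shows "W_preserving_map n d (matvec n (row_mix_mat s \<kappa>))"
  unfolding W_preserving_map_def
proof (intro allI impI)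
  fix i assume i: "i < n"
  have "in_W_power n d (if \<kappa> i < d then 1 else 0) (\<lambda>z. z (\<kappa> i))"
    using kn i by (intro in_W_power_var) auto
  then have "in_W_power n d (if i < d then 1 else 0) (\<lambda>z. z (\<kappa> i))"
    by (rule in_W_power_mono[rotated]) (use kd in auto)
  then have "in_W_power n d (0 + (if i < d then 1 else 0)) (\<lambda>z. s * z (\<kappa> i))"
    by (rule in_W_power_mult[OF in_W_power_const])
  then have "in_W_power n d (if i < d then 1 else 0) (\<lambda>z. z i + s * z (\<kappa> i))"
    using in_W_power_add[OF in_W_power_var[OF i]] by simp
  then show "in_W_power n d (if i < d then 1 else 0) (\<lambda>z. matvec n (row_mix_mat s \<kappa>) z i)"
    using i by (simp add: matvec_row_mix_mat[OF kn])
qed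

lemma exists_idempotent_min_index_map:
  fixes m :: "nat \<Rightarrow> 'a::linorder"
  assumes "0 < d" "d \<le> n"
  shows "\<exists>\<kappa>. (\<forall>j<n. \<kappa> j < n) \<and> (\<forall>j<d. \<kappa> j < d) \<and> (\<forall>j. \<kappa> (\<kappa> j) = \<kappa> j)
    \<and> (\<forall>j<d. m (\<kappa> j) = Min (m ` {..<d})) \<and> (\<forall>j. d \<le> j \<longrightarrow> m (\<kappa> j) = Min (m ` {..<n}))"
proof -
  have "Min (m ` {..<d}) \<in> m ` {..<d}" using assms(1) by (intro Min_in) auto
  then obtain k1 where k1: "k1 < d" "m k1 = Min (m ` {..<d})" by (metis imageE lessThan_iff)
  \<comment> \<open>The minimum over all indices is attained either at \<open>k1\<close> or at an index \<open>\<ge> d\<close>.\<close>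
  obtain k2 where k2: "k2 < n" "m k2 = Min (m ` {..<n})" "k2 = k1 \<or> d \<le> k2"
  proof (cases "m k1 = Min (m ` {..<n})")
    case True
    then show ?thesis using that[of k1] k1 assms(2) by simp
  next
    case False
    have "Min (m ` {..<n}) \<in> m ` {..<n}" using assms by (intro Min_in) (auto simp: lessThan_empty_iff)
    then obtain k where k: "k < n" "m k = Min (m ` {..<n})" by (metis imageE lessThan_iff)
    have "\<not> k < d"
    proof
      assume "k < d"
      then have "m k1 \<le> m k" using k1 by simp
      moreover have "m k \<le> m k1" unfolding k(2) using k1(1) assms(2) by (intro Min_le) auto
      ultimately show False using False k(2) by simp
    qed
    then show ?thesis using that k by simp
  qed
  define \<kappa> where "\<kappa> j = (if j < d then k1 else k2)" for j
  show ?thesis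
    by (rule exI[of _ \<kappa>]) (use k1 k2 assms(2) in \<open>auto simp: \<kappa>_def\<close>)
qed

lemma poly_fun_add_multiple:
  assumes "poly_fun n f" "poly_fun n g"
  shows "poly_fun n (\<lambda>z. f z + t * g z)"
  using assms in_W_power_add[OF _ in_W_power_mult[OF in_W_power_const, of n 0 0 _ t, simplified]]
  unfolding poly_fun_iff_in_W_power_0[where d = 0] by blast

lemma multW_row_mix_transform:
  assumes dn: "d \<le> n" and P: "\<forall>k<n. poly_fun n (P k)"
    and kn: "\<forall>i<n. \<kappa> i < n" and kd: "\<forall>i<d. \<kappa> i < d" and idem: "\<forall>i. \<kappa> (\<kappa> i) = \<kappa> i"
    and cancel: "s + s' + s * s' = 0" and j: "j < n"
  defines "Q \<equiv> \<lambda>w. \<Sum>k<n. row_mix_mat s \<kappa> j k * P k (matvec n (row_mix_mat s' \<kappa>) w)"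
  shows "poly_fun n Q" and "multW n d Q = multW n d (\<lambda>z. P j z + s * P (\<kappa> j) z)"
proof -
  have G: "poly_fun n (\<lambda>z. P j z + s * P (\<kappa> j) z)"
    using P kn j by (intro poly_fun_add_multiple) auto
  have Q_eq: "Q = (\<lambda>w. P j (matvec n (row_mix_mat s' \<kappa>) w) + s * P (\<kappa> j) (matvec n (row_mix_mat s' \<kappa>) w))"
    unfolding Q_def using row_mix_mat_row_sum[OF j] kn j by simp
  have cancel': "s' + s + s' * s = 0" using cancel by (simp add: algebra_simps)
  show "poly_fun n Q" unfolding Q_eq
    by (rule W_preserving_map_comp_poly_fun[OF dn W_preserving_map_row_mix_mat[OF kn kd] G])
  show "multW n d Q = multW n d (\<lambda>z. P j z + s * P (\<kappa> j) z)" unfolding Q_eq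
    by (rule multW_comp_invertible[OF dn G W_preserving_map_row_mix_mat[OF kn kd]
          W_preserving_map_row_mix_mat[OF kn kd] matvec_row_mix_mat_inverse[OF kn idem cancel']])
qed

lemma exists_generic_row_mix_param:
  assumes dn: "d \<le> n" and P: "\<forall>j<n. poly_fun n (P j)" and kn: "\<forall>j<n. \<kappa> j < n"
    and le: "\<forall>j<n. multW n d (P (\<kappa> j)) \<le> multW n d (P j)"
  shows "\<exists>t. t \<noteq> -1 \<and> (\<forall>j<n. multW n d (\<lambda>z. P j z + t * P (\<kappa> j) z) = multW n d (P (\<kappa> j)))"
proof -
  have "\<forall>j\<in>{..<n}. \<exists>t0. \<forall>t. t \<noteq> t0 \<longrightarrow> multW n d (\<lambda>z. P j z + t * P (\<kappa> j) z) = multW n d (P (\<kappa> j))"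
    using multW_add_generic_multiple[OF dn] P kn le by simp
  from bchoice[OF this] obtain t0
    where t0: "\<forall>j\<in>{..<n}. \<forall>t. t \<noteq> t0 j \<longrightarrow> multW n d (\<lambda>z. P j z + t * P (\<kappa> j) z) = multW n d (P (\<kappa> j))"
    by (elim exE)
  obtain t :: complex where "t \<notin> t0 ` {..<n} \<union> {-1}"
    using ex_new_if_finite[OF infinite_UNIV_char_0, of "t0 ` {..<n} \<union> {-1}"] by blast
  then show ?thesis using t0 by (intro exI[of _ t]) auto
qed

theorem lemma2p1:
  fixes n d :: nat and P :: "nat \<Rightarrow> (nat \<Rightarrow> complex) \<Rightarrow> complex"
  assumes "1 \<le> d" and "d \<le> n"
    and "\<forall>j<n. poly_fun n (P j)"
  shows "\<exists>A B. inverse_mats n A B \<and> matvec n A ` Wset n d = Wset n d \<and>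
     (\<forall>j<n. poly_fun n (\<lambda>w. \<Sum>k<n. A j k * P k (matvec n B w))) \<and>
     (\<forall>j<d. multW n d (\<lambda>w. \<Sum>k<n. A j k * P k (matvec n B w))
              = Min {multW n d (P i) | i. i < d}) \<and>
     (\<forall>j. d \<le> j \<and> j < n \<longrightarrow> multW n d (\<lambda>w. \<Sum>k<n. A j k * P k (matvec n B w))
              = Min {multW n d (P i) | i. i < n})"
proof -
  note dn = assms(2) and P = assms(3)
  define m where "m i = multW n d (P i)" for i
  obtain \<kappa> where kn: "\<forall>j<n. \<kappa> j < n" and kd: "\<forall>j<d. \<kappa> j < d" and idem: "\<forall>j. \<kappa> (\<kappa> j) = \<kappa> j"
    and min_d: "\<forall>j<d. m (\<kappa> j) = Min (m ` {..<d})" and min_n: "\<forall>j. d \<le> j \<longrightarrow> m (\<kappa> j) = Min (m ` {..<n})"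
    using exists_idempotent_min_index_map[of d n m] assms(1,2) by auto
  have "\<forall>j<n. m (\<kappa> j) \<le> m j"
    using min_d min_n by (metis Min_le finite_imageI finite_lessThan image_eqI lessThan_iff not_less)
  then obtain t where t: "t \<noteq> -1" "\<forall>j<n. multW n d (\<lambda>z. P j z + t * P (\<kappa> j) z) = m (\<kappa> j)"
    using exists_generic_row_mix_param[OF dn P kn] unfolding m_def by blast
  have cancel: "t + - (t / (1 + t)) + t * - (t / (1 + t)) = 0" using t(1) by (rule row_mix_param_inverse)
  define A where "A = row_mix_mat t \<kappa>"
  define B where "B = row_mix_mat (- (t / (1 + t))) \<kappa>"
  have "inverse_mats n A B"
    unfolding A_def B_def by (rule inverse_mats_row_mix_mat[OF kn idem cancel])
  moreover have "matvec n A ` Wset n d = Wset n d"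
    unfolding A_def by (rule row_mix_mat_image_Wset[OF kn kd idem cancel])
  moreover note multW_row_mix_transform[OF dn P kn kd idem cancel, folded A_def B_def]
  moreover have "{multW n d (P i) | i. i < k} = m ` {..<k}" for k by (auto simp: m_def)
  ultimately show ?thesis using t(2) min_d min_n dn by (intro exI[of _ A] exI[of _ B]) auto
qed

end
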